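(* Let $i$ be an integer. Let $\Phi(z)=\sum_{n\ge0}c_nz^n$, where $c_n$ is the number of unbounded Deutsch paths of $n$ steps from $(0,0)$ to $(n,i)$; there is no restriction on the levels visited. Let $v=v(z)$ be the power series with $v(0)=0$ satisfying $z=\frac{v}{1+v+v^2}$. Then $$\Phi(z)=\frac{(1+v)^{-i-2}\,v\,(1+v+v^2)}{1-v}\quad\text{for } i<0,$$ $$\Phi(z)=\frac{v^{i}(1+v+v^2)}{(1-v)(1+v)^{i+2}}\quad\text{for } i\ge0.$$
   Context: A Deutsch path is a lattice path whose steps are up-steps $(1,1)$ and down-steps $(1,-k)$ for any integer $k\ge1$. The series $v$ is given explicitly by $v=\frac{1-z-\sqrt{1-2z-3z^2}}{2z}$. *)

theory Defs
  imports "HOL-Computational_Algebra.Formal_Power_Series"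
begin

definition deutsch_steps :: "int set" where
  "deutsch_steps = {1} \<union> {d. d \<le> -1}"

text \<open>Unbounded Deutsch paths with n steps from (0,0) to (n,i), encoded by the
  list of their height increments (the x-coordinate advances by 1 at each step).\<close>
definition unbounded_deutsch_paths :: "nat \<Rightarrow> int \<Rightarrow> int list set" where
  "unbounded_deutsch_paths n i =
     {xs. length xs = n \<and> set xs \<subseteq> deutsch_steps \<and> sum_list xs = i}"

definition deutsch_count :: "nat \<Rightarrow> int \<Rightarrow> nat" where
  "deutsch_count n i = card (unbounded_deutsch_paths n i)"

definition Phi :: "int \<Rightarrow> real fps" where
  "Phi i = Abs_fps (\<lambda>n. real (deutsch_count n i))"

end

theory Submission
  imports Defs
begin

text \<open>Removing the first step of a path gives
  \<open>c(n+1, i) = c(n, i-1) + \<Sum>k\<ge>1. c(n, i+k)\<close>, a finite sum because \<open>c(n, j) = 0\<close> for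
  \<open>j > n\<close>; together with \<open>c(0, i) = [i = 0]\<close> this recurrence determines every \<open>\<Phi>_i\<close>.
  For the claimed closed forms \<open>H_i\<close> the tails \<open>T_i = \<Sum>k>i. H_k\<close> are closed forms too,
  \<open>A (1+v)^(-i)\<close> for \<open>i < 0\<close> and \<open>A (1+v) w^(i+1)\<close> for \<open>i \<ge> 0\<close>, where \<open>A = H_0\<close> and
  \<open>w = v/(1+v)\<close>; as \<open>T_i\<close> has order \<open>> i\<close> for \<open>i \<ge> 0\<close>, truncating the tail does not
  affect the coefficients that matter. So it remains to check
  \<open>H_i = [i = 0] + z (H_(i-1) + T_i)\<close>, which follows from \<open>z (1 + v + v^2) = v\<close>.\<close>

unbundle fps_syntax

lemma sum_list_le_length_if_deutsch_steps:
  "set xs \<subseteq> deutsch_steps \<Longrightarrow> sum_list xs \<le> int (length xs)"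
  by (induction xs) (auto simp: deutsch_steps_def)

lemma unbounded_deutsch_paths_height_le:
  "xs \<in> unbounded_deutsch_paths n i \<Longrightarrow> i \<le> int n"
  using sum_list_le_length_if_deutsch_steps unfolding unbounded_deutsch_paths_def by fastforce

lemma unbounded_deutsch_paths_0:
  "unbounded_deutsch_paths 0 i = (if i = 0 then {[]} else {})"
  by (auto simp: unbounded_deutsch_paths_def)

lemma unbounded_deutsch_paths_Suc:
  assumes "int n \<le> int K + i"
  shows "unbounded_deutsch_paths (Suc n) i =
           Cons 1 ` unbounded_deutsch_paths n (i - 1) \<union>
           (\<Union>k\<in>{1..K}. Cons (- int k) ` unbounded_deutsch_paths n (i + int k))"
    (is "?lhs = ?up \<union> ?down")
proof
  show "?up \<union> ?down \<subseteq> ?lhs"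
    by (auto simp: unbounded_deutsch_paths_def deutsch_steps_def)
next
  show "?lhs \<subseteq> ?up \<union> ?down"
  proof
    fix ys assume "ys \<in> ?lhs"
    then obtain x xs where ys: "ys = x # xs" and x: "x \<in> deutsch_steps"
      and xs: "xs \<in> unbounded_deutsch_paths n (i - x)"
      unfolding unbounded_deutsch_paths_def by (cases ys) auto
    show "ys \<in> ?up \<union> ?down"
    proof (cases "x = 1")
      case True
      then show ?thesis using ys xs by auto
    next
      case False
      then obtain k where k: "x = - int k" "1 \<le> k"
        using x by (auto simp: deutsch_steps_def intro: that[of "nat (- x)"])
      have "k \<le> K"
        using unbounded_deutsch_paths_height_le[OF xs] assms k by simp
      then show ?thesis using ys xs k by auto
    qed
  qed
qed

lemma finite_unbounded_deutsch_paths: "finite (unbounded_deutsch_paths n i)"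
proof (induction n arbitrary: i)
  case 0
  then show ?case by (simp add: unbounded_deutsch_paths_0)
next
  case (Suc n)
  have K: "int n \<le> int (nat (int n - i)) + i" by simp
  show ?case unfolding unbounded_deutsch_paths_Suc[OF K] using Suc.IH by simp
qed

lemma deutsch_count_0: "deutsch_count 0 i = (if i = 0 then 1 else 0)"
  by (simp add: deutsch_count_def unbounded_deutsch_paths_0)

lemma deutsch_count_Suc:
  assumes "int n \<le> int K + i"
  shows "deutsch_count (Suc n) i = deutsch_count n (i - 1) + (\<Sum>k=1..K. deutsch_count n (i + int k))"
proof -
  have "card (\<Union>k\<in>{1..K}. Cons (- int k) ` unbounded_deutsch_paths n (i + int k)) =
        (\<Sum>k=1..K. card (Cons (- int k) ` unbounded_deutsch_paths n (i + int k)))"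
    by (rule card_UN_disjoint) (auto simp: finite_unbounded_deutsch_paths)
  then show ?thesis
    unfolding deutsch_count_def unbounded_deutsch_paths_Suc[OF assms]
    by (subst card_Un_disjoint) (auto simp: finite_unbounded_deutsch_paths card_image)
qed

lemma Phi_eqI:
  fixes F :: "int \<Rightarrow> real fps"
  assumes F_nth_0: "\<And>i. F i $ 0 = (if i = 0 then 1 else 0)"
    and F_nth_Suc: "\<And>n i K. int n \<le> int K + i \<Longrightarrow>
                       F i $ Suc n = F (i - 1) $ n + (\<Sum>k=1..K. F (i + int k) $ n)"
  shows "Phi i = F i"
proof -
  have "real (deutsch_count n i) = F i $ n" for n i
  proof (induction n arbitrary: i)
    case 0
    then show ?case by (simp add: deutsch_count_0 F_nth_0)
  next
    case (Suc n)
    have K: "int n \<le> int (nat (int n - i)) + i" by simp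
    show ?case by (simp add: deutsch_count_Suc[OF K] F_nth_Suc[OF K] Suc.IH)
  qed
  then show ?thesis by (simp add: Phi_def fps_eq_iff)
qed

lemma fps_nth_mult_power_eq_0:
  fixes c w :: "'a::comm_ring_1 fps"
  assumes "w $ 0 = 0" and "n < m"
  shows "(c * w ^ m) $ n = 0"
proof -
  have "w = fps_X * fps_shift 1 w"
    using assms(1) by (intro fps_ext) simp
  then have "c * w ^ m = fps_X ^ m * (c * fps_shift 1 w ^ m)"
    by (metis mult.left_commute power_mult_distrib)
  then show ?thesis
    using assms(2) by (simp add: fps_X_power_mult_nth)
qed

locale deutsch_parametrization =
  fixes v :: "real fps"
  assumes v_nth_0: "v $ 0 = 0"
    and fps_X_eq: "fps_X = v / (1 + v + v^2)"
begin

definition "s = 1 + v + v^2"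
definition "p = 1 + v"
definition "q = 1 - v"
definition "u = inverse p"
definition "r = inverse q"
definition "A = s * r * u^2"
definition "w = v * u"

definition H :: "int \<Rightarrow> real fps" where
  "H j = (if j < 0 then v * p ^ nat (- j) * A else w ^ nat j * A)"

definition T :: "int \<Rightarrow> real fps" where
  "T j = (if j < 0 then A * p ^ nat (- j) else A * p * w ^ nat (j + 1))"

lemma u_times_p: "u * p = 1"
  unfolding u_def by (rule inverse_mult_eq_1) (simp add: p_def v_nth_0)

lemma r_times_q: "r * q = 1"
  unfolding r_def by (rule inverse_mult_eq_1) (simp add: q_def v_nth_0)

lemma fps_X_times_s: "fps_X * s = v"
proof -
  have s_nth_0: "s $ 0 \<noteq> 0" by (simp add: s_def v_nth_0 power2_eq_square)
  then have "fps_X = v * inverse s"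
    using fps_X_eq unfolding s_def[symmetric] by (simp add: fps_divide_unit)
  then have "fps_X * s = v * (inverse s * s)" by (simp add: mult.assoc)
  also have "inverse s * s = 1" using s_nth_0 by (rule inverse_mult_eq_1)
  finally show ?thesis by simp
qed

lemma p_times_w: "p * w = v"
  using u_times_p unfolding w_def by (metis mult.left_commute mult.right_neutral)

lemma w_nth_0: "w $ 0 = 0"
  by (simp add: w_def v_nth_0)

lemma A_nth_0: "A $ 0 = 1"
proof -
  have "u $ 0 = 1" "r $ 0 = 1"
    by (simp_all add: u_def r_def p_def q_def v_nth_0)
  then show ?thesis by (simp add: A_def s_def v_nth_0 power2_eq_square)
qed

lemma H_eq_T_diff: "H j = T (j - 1) - T j"
proof (cases "j < 0")
  case True
  then have "nat (- (j - 1)) = Suc (nat (- j))" by auto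
  with True show ?thesis unfolding H_def T_def by (simp add: p_def algebra_simps)
next
  case False
  define m where "m = nat j"
  then have m: "nat (j + 1) = Suc m" using False by simp
  have "A * p * w ^ m - A * p * w ^ Suc m = w ^ m * A * (p - p * w)"
    by (simp add: algebra_simps)
  also have "p - p * w = 1" unfolding p_times_w by (simp add: p_def)
  finally have "w ^ m * A = A * p * w ^ m - A * p * w ^ Suc m" by simp
  moreover have "T (j - 1) = A * p * w ^ m"
    using False m by (cases "j = 0") (auto simp: T_def m_def)
  ultimately show ?thesis using False m unfolding H_def T_def m_def by simp
qed

lemma sum_H_eq_T_diff: "(\<Sum>k=1..K. H (i + int k)) = T i - T (i + int K)"
proof (induction K)
  case 0
  then show ?case by simp
next
  case (Suc K)
  then show ?case using H_eq_T_diff[of "i + int (Suc K)"] by simp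
qed

lemma T_nth_eq_0: "0 \<le> j \<Longrightarrow> int n \<le> j \<Longrightarrow> T j $ n = 0"
  unfolding T_def using fps_nth_mult_power_eq_0[OF w_nth_0] by simp

lemma fps_X_times_one_plus_p_w2: "fps_X * (1 + p * w^2) = w"
proof -
  have "1 + p * w^2 = s * u"
    using u_times_p unfolding w_def s_def p_def by algebra
  then show ?thesis
    using fps_X_times_s unfolding w_def by (simp add: mult.assoc[symmetric])
qed

lemma A_rec: "A = 1 + fps_X * (v * p * A + A * p * w)"
proof -
  have "A * q * p^2 = s"
    using u_times_p r_times_q unfolding A_def by algebra
  then show ?thesis
    using fps_X_times_s p_times_w unfolding s_def p_def q_def by algebra
qed

lemma H_rec: "H j = (if j = 0 then 1 else 0) + fps_X * (H (j - 1) + T j)"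
proof -
  consider "j < 0" | "j = 0" | "0 < j" by linarith
  then show ?thesis
  proof cases
    case 1
    define m where "m = nat (- j)"
    have "nat (- (j - 1)) = Suc m" using 1 m_def by auto
    moreover have "v * p ^ Suc m * A + A * p ^ m = p ^ m * A * s"
      by (simp add: p_def s_def algebra_simps power2_eq_square)
    ultimately show ?thesis
      using 1 fps_X_times_s unfolding H_def T_def m_def[symmetric]
      by (simp add: algebra_simps)
  next
    case 2
    then show ?thesis unfolding H_def T_def using A_rec by simp
  next
    case 3
    define m where "m = nat (j - 1)"
    have m: "nat j = Suc m" "nat (j + 1) = Suc (Suc m)" using 3 m_def by auto
    have "fps_X * (w ^ m * A + A * p * w ^ Suc (Suc m)) = w ^ m * A * (fps_X * (1 + p * w^2))"
      by (simp add: algebra_simps power2_eq_square)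
    then show ?thesis
      using 3 m unfolding H_def T_def m_def[symmetric] fps_X_times_one_plus_p_w2
      by (simp add: algebra_simps)
  qed
qed

lemma H_nth_0: "H j $ 0 = (if j = 0 then 1 else 0)"
  unfolding H_def by (auto simp: v_nth_0 w_nth_0 A_nth_0)

lemma H_nth_Suc:
  assumes "int n \<le> int K + i"
  shows "H i $ Suc n = H (i - 1) $ n + (\<Sum>k=1..K. H (i + int k) $ n)"
proof -
  have "T i = (\<Sum>k=1..K. H (i + int k)) + T (i + int K)"
    using sum_H_eq_T_diff by simp
  moreover have "T (i + int K) $ n = 0"
    using assms by (intro T_nth_eq_0) auto
  ultimately have "T i $ n = (\<Sum>k=1..K. H (i + int k) $ n)"
    by (simp add: fps_sum_nth)
  then show ?thesis by (subst H_rec) simp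
qed

lemma Phi_eq_H: "Phi i = H i"
  using H_nth_0 H_nth_Suc by (rule Phi_eqI)

lemma H_neg:
  assumes "i < 0"
  shows "H i = (1 + v) ^ nat (- i - 1) * v * (1 + v + v^2) / ((1 + v) * (1 - v))"
proof -
  define m where "m = nat (- i - 1)"
  have "(p * q) $ 0 \<noteq> 0" by (simp add: p_def q_def v_nth_0)
  then have "p ^ m * v * s / (p * q) = p ^ m * v * s * (u * r)"
    by (simp add: fps_divide_unit fps_inverse_mult u_def r_def)
  also have "\<dots> = v * p ^ Suc m * A"
  proof -
    have "v * p ^ Suc m * A = p ^ m * v * s * (u * r) * (u * p)"
      by (simp add: A_def power2_eq_square algebra_simps)
    then show ?thesis unfolding u_times_p mult_1_right by (rule sym)
  qed
  also have "Suc m = nat (- i)" using assms m_def by simp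
  finally show ?thesis
    using assms unfolding H_def m_def p_def q_def s_def by simp
qed

lemma H_nonneg:
  assumes "0 \<le> i"
  shows "H i = v ^ nat i * (1 + v + v^2) / ((1 - v) * (1 + v) ^ nat (i + 2))"
proof -
  define m where "m = nat i"
  have "(q * p ^ (m + 2)) $ 0 \<noteq> 0" by (simp add: p_def q_def v_nth_0 fps_nth_power_0)
  then have "v ^ m * s / (q * p ^ (m + 2)) = v ^ m * s * (r * u ^ (m + 2))"
    by (simp add: fps_divide_unit fps_inverse_mult fps_inverse_power u_def r_def)
  also have "\<dots> = w ^ m * A"
    unfolding A_def w_def by (simp add: power_mult_distrib power_add power2_eq_square algebra_simps)
  also have "m + 2 = nat (i + 2)" using assms m_def by simp
  finally show ?thesis
    using assms unfolding H_def m_def p_def q_def s_def by simp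
qed

end

theorem theorem8:
  fixes v :: "real fps" and i :: int
  assumes v0: "fps_nth v 0 = 0"
    and vz: "fps_X = v / (1 + v + v^2)"
  shows "(i < 0 \<longrightarrow>
            Phi i = (1 + v) ^ nat (- i - 1) * v * (1 + v + v^2) / ((1 + v) * (1 - v)))
       \<and> (0 \<le> i \<longrightarrow>
            Phi i = v ^ nat i * (1 + v + v^2) / ((1 - v) * (1 + v) ^ nat (i + 2)))"
proof -
  interpret deutsch_parametrization v
    using v0 vz by unfold_locales
  show ?thesis using Phi_eq_H H_neg H_nonneg by simp
qed

end
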